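(* For any locale $L$, its DeMorganization (the largest dense extremally disconnected sublocale of $L$) is a fitted sublocale of $L$.
   Context: A frame (locale) $L$ is a complete lattice in which finite meets distribute over arbitrary joins; $a\to b$ denotes the Heyting implication and $a^*=a\to0$ the pseudocomplement. A sublocale of $L$ is a subset $S\subseteq L$ closed under arbitrary meets such that $a\to s\in S$ for all $a\in L$, $s\in S$; it is a frame under the inherited order. A sublocale $S$ is dense if $\bigwedge S=0$. A frame is extremally disconnected if $x^*\vee x^{**}=1$ for all its elements. The open sublocale of $a\in L$ is $\mathfrak{o}(a)=\{a\to b\mid b\in L\}$. A sublocale is fitted if it is an intersection of a family of open sublocales. *)

theory Defs
  imports Main
begin

definition frame :: "'a::complete_lattice itself \<Rightarrow> bool" where
  "frame _ \<longleftrightarrow> (\<forall>(a::'a) A. inf a (Sup A) = Sup ((inf a) ` A))"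

definition himp :: "'a::complete_lattice \<Rightarrow> 'a \<Rightarrow> 'a" where
  "himp a b = Sup {c. inf a c \<le> b}"

definition is_sublocale :: "'a::complete_lattice set \<Rightarrow> bool" where
  "is_sublocale S \<longleftrightarrow> (\<forall>A \<subseteq> S. Inf A \<in> S) \<and> (\<forall>a s. s \<in> S \<longrightarrow> himp a s \<in> S)"

definition join_in :: "'a::complete_lattice set \<Rightarrow> 'a set \<Rightarrow> 'a" where
  "join_in S A = Inf {s \<in> S. \<forall>a\<in>A. a \<le> s}"

definition bot_in :: "'a::complete_lattice set \<Rightarrow> 'a" where
  "bot_in S = Inf S"

definition pcomp_in :: "'a::complete_lattice set \<Rightarrow> 'a \<Rightarrow> 'a" where
  "pcomp_in S x = join_in S {y \<in> S. inf x y = bot_in S}"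

definition dense_sublocale :: "'a::complete_lattice set \<Rightarrow> bool" where
  "dense_sublocale S \<longleftrightarrow> is_sublocale S \<and> Inf S = bot"

text \<open>S (as a frame) is extremally disconnected: x* \/ x** = 1 for all x in S
  (top of S is the top of L, since S contains Inf {}).\<close>
definition extremally_disconnected_in :: "'a::complete_lattice set \<Rightarrow> bool" where
  "extremally_disconnected_in S \<longleftrightarrow>
     (\<forall>x\<in>S. join_in S {pcomp_in S x, pcomp_in S (pcomp_in S x)} = top)"

definition open_sublocale :: "'a::complete_lattice \<Rightarrow> 'a set" where
  "open_sublocale a = {himp a b | b. True}"

definition fitted :: "'a::complete_lattice set \<Rightarrow> bool" where
  "fitted S \<longleftrightarrow> (\<exists>F. (\<forall>T\<in>F. \<exists>a. T = open_sublocale a) \<and> S = \<Inter>F)"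

definition is_demorganization :: "'a::complete_lattice set \<Rightarrow> bool" where
  "is_demorganization S \<longleftrightarrow>
     dense_sublocale S \<and> extremally_disconnected_in S \<and>
     (\<forall>T. dense_sublocale T \<and> extremally_disconnected_in T \<longrightarrow> T \<subseteq> S)"

end

theory Submission
  imports Defs
begin

text \<open>
  The DeMorganization is the intersection of the open sublocales \<open>o(x\<^sup>* \<squnion> x\<^sup>*\<^sup>*)\<close>,
  \<open>x \<in> L\<close>. In a dense sublocale \<open>U\<close> pseudocomplements are computed as in \<open>L\<close>, and a
  join \<open>\<Squnion>\<^sub>U A\<close> in a sublocale equals \<open>1\<close> exactly when \<open>U \<subseteq> o(\<Squnion>A)\<close>. Hence a dense
  sublocale is extremally disconnected iff it lies in every \<open>o(x\<^sup>* \<squnion> x\<^sup>*\<^sup>*)\<close>. Since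
  \<open>(x\<^sup>* \<squnion> x\<^sup>*\<^sup>*)\<^sup>* = 0\<close>, the intersection of these open sublocales contains \<open>0\<close>, so it is
  itself dense and therefore the largest dense extremally disconnected sublocale.
\<close>

lemma open_sublocale_iff: "s \<in> open_sublocale a \<longleftrightarrow> (\<exists>b. s = himp a b)"
  by (simp add: open_sublocale_def)

lemma is_sublocale_Inter:
  assumes "\<And>T. T \<in> F \<Longrightarrow> is_sublocale T"
  shows "is_sublocale (\<Inter>F)"
  unfolding is_sublocale_def
proof (intro conjI allI impI)
  fix A assume "A \<subseteq> \<Inter>F"
  then have "A \<subseteq> T" if "T \<in> F" for T
    using that by blast
  then show "Inf A \<in> \<Inter>F"
    using assms by (simp add: is_sublocale_def)
next
  fix a s assume "s \<in> \<Inter>F"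
  then show "himp a s \<in> \<Inter>F"
    using assms by (auto simp: is_sublocale_def)
qed

lemma fitted_INT_open_sublocale: "fitted (\<Inter>i\<in>I. open_sublocale (f i))"
  unfolding fitted_def by (rule exI [of _ "(\<lambda>i. open_sublocale (f i)) ` I"]) auto

lemma eq_iff_same_lower_bounds: "(\<And>c. c \<le> x \<longleftrightarrow> c \<le> y) \<Longrightarrow> x = (y::'a::order)"
  by (meson order.antisym order.refl)

lemma join_in_upper: "a \<in> A \<Longrightarrow> a \<le> join_in S A"
  unfolding join_in_def by (auto intro: Inf_greatest)

lemma join_in_least: "u \<in> S \<Longrightarrow> (\<And>a. a \<in> A \<Longrightarrow> a \<le> u) \<Longrightarrow> join_in S A \<le> u"
  unfolding join_in_def by (auto intro: Inf_lower)

lemma join_in_eq: "m \<in> S \<Longrightarrow> m \<in> A \<Longrightarrow> (\<And>a. a \<in> A \<Longrightarrow> a \<le> m) \<Longrightarrow> join_in S A = m"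
  by (meson join_in_least join_in_upper order.antisym)

lemma join_in_mem: "is_sublocale S \<Longrightarrow> join_in S A \<in> S"
  unfolding join_in_def is_sublocale_def by auto

lemma bot_mem_dense_sublocale: "dense_sublocale U \<Longrightarrow> bot \<in> U"
  unfolding dense_sublocale_def is_sublocale_def by (metis order_refl)

context
  assumes frame: "frame TYPE('a::complete_lattice)"
begin

lemma inf_Sup_frame: "inf (a::'a) (Sup A) = Sup (inf a ` A)"
  using frame unfolding frame_def by blast

lemma inf_sup_distrib_frame: "inf (a::'a) (sup b c) = sup (inf a b) (inf a c)"
  using inf_Sup_frame[of a "{b, c}"] by simp

lemma le_himp_iff: "(c::'a) \<le> himp a b \<longleftrightarrow> inf a c \<le> b"
proof
  assume "c \<le> himp a b"
  then have "inf a c \<le> inf a (Sup {c. inf a c \<le> b})"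
    by (auto simp: himp_def intro: le_infI2)
  also have "\<dots> = Sup (inf a ` {c. inf a c \<le> b})"
    by (rule inf_Sup_frame)
  also have "\<dots> \<le> b"
    by (auto intro: Sup_least)
  finally show "inf a c \<le> b" .
next
  assume "inf a c \<le> b"
  then show "c \<le> himp a b"
    unfolding himp_def by (auto intro: Sup_upper)
qed

lemma inf_himp_le: "inf (a::'a) (himp a b) \<le> b"
  by (simp add: le_himp_iff [symmetric])

lemma le_himp: "(b::'a) \<le> himp a b"
  by (simp add: le_himp_iff)

lemma himp_eq_top: "(a::'a) \<le> b \<Longrightarrow> himp a b = top"
  by (rule top_unique [THEN iffD1]) (simp add: le_himp_iff le_infI1)

lemma himp_mono: "(b::'a) \<le> c \<Longrightarrow> himp a b \<le> himp a c"
  using inf_himp_le le_himp_iff order.trans by blast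

lemma himp_himp_swap: "himp (a::'a) (himp b c) = himp b (himp a c)"
  by (rule eq_iff_same_lower_bounds) (simp add: le_himp_iff inf_left_commute)

lemma himp_himp_same: "himp (a::'a) (himp a b) = himp a b"
  by (rule eq_iff_same_lower_bounds) (simp add: le_himp_iff inf_assoc [symmetric])

lemma mem_open_sublocale_iff: "(s::'a) \<in> open_sublocale a \<longleftrightarrow> himp a s = s"
  by (metis open_sublocale_iff himp_himp_same)

lemma is_sublocale_open_sublocale: "is_sublocale (open_sublocale (a::'a))"
  unfolding is_sublocale_def
proof (intro conjI allI impI)
  fix A :: "'a set"
  assume A: "A \<subseteq> open_sublocale a"
  have "himp a (Inf A) \<le> Inf A"
  proof (rule Inf_greatest)
    fix s assume "s \<in> A"
    then have "himp a (Inf A) \<le> himp a s"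
      by (intro himp_mono Inf_lower)
    also have "\<dots> = s"
      using A \<open>s \<in> A\<close> by (auto simp: mem_open_sublocale_iff)
    finally show "himp a (Inf A) \<le> s" .
  qed
  then show "Inf A \<in> open_sublocale a"
    by (simp add: mem_open_sublocale_iff order.antisym le_himp)
next
  fix b s :: 'a
  assume "s \<in> open_sublocale a"
  then show "himp b s \<in> open_sublocale a"
    by (metis mem_open_sublocale_iff himp_himp_swap)
qed

text \<open>
  A sublocale \<open>U\<close> is fixed by \<open>\<Squnion>A \<rightarrow> -\<close> iff \<open>\<Squnion>\<^sub>U A = 1\<close>: for \<open>s \<in> U\<close> the element
  \<open>(t \<rightarrow> s) \<in> U\<close>, where \<open>t = \<Squnion>A \<rightarrow> s\<close>, bounds \<open>A\<close>, so it is \<open>1\<close> and \<open>t \<le> s\<close>.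
\<close>
lemma join_in_eq_top_iff:
  assumes U: "is_sublocale U"
  shows "join_in U A = top \<longleftrightarrow> U \<subseteq> open_sublocale (Sup A :: 'a)"
proof
  assume top: "join_in U A = top"
  show "U \<subseteq> open_sublocale (Sup A)"
  proof
    fix s assume s: "s \<in> U"
    define t where "t = himp (Sup A) s"
    have "himp t s \<in> U" and "t \<in> U"
      using U s by (auto simp: is_sublocale_def t_def)
    moreover have "Sup A \<le> himp t s"
      using inf_himp_le by (simp add: t_def le_himp_iff inf_commute)
    ultimately have "join_in U A \<le> himp t s"
      by (meson Sup_upper join_in_least order.trans)
    then have "t \<le> himp t s"
      by (simp add: top top_unique)
    then have "t \<le> s"
      by (simp add: le_himp_iff)
    then show "s \<in> open_sublocale (Sup A)"
      by (simp add: mem_open_sublocale_iff t_def order.antisym le_himp)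
  qed
next
  assume sub: "U \<subseteq> open_sublocale (Sup A)"
  have "join_in U A \<in> U"
    using U by (rule join_in_mem)
  moreover have "Sup A \<le> join_in U A"
    by (auto intro: Sup_least join_in_upper)
  ultimately show "join_in U A = top"
    using sub himp_eq_top by (auto simp: mem_open_sublocale_iff)
qed

definition pseudocomp :: "'a \<Rightarrow> 'a" where
  "pseudocomp x = himp x bot"

lemma le_pseudocomp_iff: "c \<le> pseudocomp x \<longleftrightarrow> inf x c = bot"
  by (simp add: pseudocomp_def le_himp_iff bot_unique)

lemma inf_pseudocomp: "inf x (pseudocomp x) = bot"
  by (simp add: le_pseudocomp_iff [symmetric])

lemma le_pseudocomp_pseudocomp: "x \<le> pseudocomp (pseudocomp x)"
  by (simp add: le_pseudocomp_iff inf_pseudocomp inf_commute)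

lemma pseudocomp_antimono: "x \<le> y \<Longrightarrow> pseudocomp y \<le> pseudocomp x"
  by (metis le_pseudocomp_iff inf_pseudocomp inf_mono bot_unique inf_commute order_refl)

lemma pseudocomp_triple: "pseudocomp (pseudocomp (pseudocomp x)) = pseudocomp x"
  by (simp add: order.antisym le_pseudocomp_pseudocomp pseudocomp_antimono)

lemma pseudocomp_sup: "pseudocomp (sup x y) = inf (pseudocomp x) (pseudocomp y)"
  by (rule eq_iff_same_lower_bounds)
    (simp add: le_pseudocomp_iff inf_sup_distrib_frame inf_commute inf_assoc)

lemma pseudocomp_sup_pseudocomp: "pseudocomp (sup (pseudocomp x) (pseudocomp (pseudocomp x))) = bot"
  by (simp add: pseudocomp_sup inf_pseudocomp inf_commute)

lemma pseudocomp_mem_dense_sublocale: "dense_sublocale U \<Longrightarrow> pseudocomp x \<in> U"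
  using bot_mem_dense_sublocale unfolding dense_sublocale_def is_sublocale_def pseudocomp_def
  by blast

lemma pcomp_in_dense_sublocale:
  assumes "dense_sublocale U" and "x \<in> U"
  shows "pcomp_in U x = pseudocomp x"
proof -
  have "bot_in U = bot"
    using assms(1) by (simp add: dense_sublocale_def bot_in_def)
  then show ?thesis
    unfolding pcomp_in_def
    using assms(1) by (auto intro: join_in_eq pseudocomp_mem_dense_sublocale
        simp: le_pseudocomp_iff inf_pseudocomp)
qed

lemma dense_extremally_disconnected_iff:
  assumes D: "dense_sublocale U"
  shows "extremally_disconnected_in U \<longleftrightarrow>
    (\<forall>x. join_in U {pseudocomp x, pseudocomp (pseudocomp x)} = top)"
proof -
  have pc: "\<And>x. x \<in> U \<Longrightarrow> pcomp_in U x = pseudocomp x"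
    using D by (rule pcomp_in_dense_sublocale)
  have pc_mem: "\<And>x. pseudocomp x \<in> U"
    using D by (rule pseudocomp_mem_dense_sublocale)
  show ?thesis
  proof
    assume ed: "extremally_disconnected_in U"
    show "\<forall>x. join_in U {pseudocomp x, pseudocomp (pseudocomp x)} = top"
    proof
      fix x
      have "join_in U {pcomp_in U y, pcomp_in U (pcomp_in U y)} = top"
        if "y = pseudocomp x" for y
        using ed pc_mem that by (simp add: extremally_disconnected_in_def)
      then show "join_in U {pseudocomp x, pseudocomp (pseudocomp x)} = top"
        by (simp add: pc pc_mem pseudocomp_triple insert_commute)
    qed
  qed (simp add: extremally_disconnected_in_def pc pc_mem)
qed

definition demorgan_sublocale :: "'a set" where
  "demorgan_sublocale =
    (\<Inter>x. open_sublocale (sup (pseudocomp x) (pseudocomp (pseudocomp x))))"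

lemma fitted_demorgan_sublocale: "fitted demorgan_sublocale"
  unfolding demorgan_sublocale_def by (rule fitted_INT_open_sublocale)

lemma dense_sublocale_demorgan_sublocale: "dense_sublocale demorgan_sublocale"
proof -
  have "bot \<in> demorgan_sublocale"
    by (simp add: demorgan_sublocale_def mem_open_sublocale_iff pseudocomp_sup_pseudocomp
        flip: pseudocomp_def)
  then have "Inf demorgan_sublocale = bot"
    by (rule Inf_lower [THEN bot_unique [THEN iffD1]])
  moreover have "is_sublocale demorgan_sublocale"
    unfolding demorgan_sublocale_def
    by (rule is_sublocale_Inter) (auto intro: is_sublocale_open_sublocale)
  ultimately show ?thesis
    by (simp add: dense_sublocale_def)
qed

lemma dense_extremally_disconnected_iff_subset:
  assumes D: "dense_sublocale U"
  shows "extremally_disconnected_in U \<longleftrightarrow> U \<subseteq> demorgan_sublocale"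
proof -
  have "is_sublocale U"
    using D by (simp add: dense_sublocale_def)
  then show ?thesis
    by (simp add: dense_extremally_disconnected_iff [OF D] join_in_eq_top_iff
        demorgan_sublocale_def le_INF_iff)
qed

lemma is_demorganization_demorgan_sublocale: "is_demorganization S \<longleftrightarrow> S = demorgan_sublocale"
  unfolding is_demorganization_def
  using dense_sublocale_demorgan_sublocale dense_extremally_disconnected_iff_subset
  by blast

end

theorem corollary4p3:
  fixes S :: "'a::complete_lattice set"
  assumes "frame TYPE('a)"
    and "is_demorganization S"
  shows "fitted S"
proof -
  have "S = demorgan_sublocale"
    using is_demorganization_demorgan_sublocale [OF assms(1)] assms(2) by blast
  then show ?thesis
    using fitted_demorgan_sublocale [OF assms(1)] by simp
qed

end
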